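(* There is no function $f:\mathbb{N}\to\mathbb{N}$ such that $\operatorname{bw}(u(D))\le f(\operatorname{dbw}(D))$ for every digraph $D$.
   Context: $u(D)$ denotes the underlying undirected (multi)graph of $D$, with one undirected edge $xy$ for each directed edge $\vec{xy}$. The branch-width $\operatorname{bw}(G)$ of an undirected (multi)graph $G$ is the minimum width of a branch decomposition $(T,\tau)$, where $T$ is a tree of maximum degree at most three, $\tau$ a bijection from the leaves of $T$ onto $E(G)$, the order of an edge $t$ of $T$ is the number of vertices incident both with an edge in $\tau(Y)$ and an edge in $E(G)\setminus\tau(Y)$ ($Y$ the leaves on one side of $T-t$), and the width is the maximum order (0 if none). Directed branch-width: for $X\subseteq E(D)$, $S^V_X=\{y: \exists x,z,\ \vec{xy}\in E(D)\setminus X,\ \vec{yz}\in X\}$, $f_D(X)=|S^V_X\cup S^V_{E(D)\setminus X}|$; $\operatorname{dbw}(D)$ is defined like branch-width but with the order of a tree edge equal to $f_D(\beta(Y))$ for a bijection $\beta$ from leaves onto $E(D)$. *)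

theory Defs
  imports Main "Graph_Theory.Digraph"
begin

record ('v,'e) umultigraph =
  uverts :: "'v set"
  uedges :: "'e set"
  ends   :: "'e \<Rightarrow> 'v set"

definition underlying :: "('v,'e) pre_digraph \<Rightarrow> ('v,'e) umultigraph" where
  "underlying D = \<lparr> uverts = verts D, uedges = arcs D,
                    ends = (\<lambda>e. {tail D e, head D e}) \<rparr>"

definition tadj :: "nat set set \<Rightarrow> nat \<Rightarrow> nat \<Rightarrow> bool" where
  "tadj TE a b \<longleftrightarrow> {a, b} \<in> TE"

definition tconnected_in :: "nat set set \<Rightarrow> nat \<Rightarrow> nat \<Rightarrow> bool" where
  "tconnected_in TE a b \<longleftrightarrow> (tadj TE)\<^sup>*\<^sup>* a b"

definition is_tree :: "nat set \<Rightarrow> nat set set \<Rightarrow> bool" where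
  "is_tree N TE \<longleftrightarrow>
     finite N \<and> N \<noteq> {} \<and>
     (\<forall>t\<in>TE. card t = 2 \<and> t \<subseteq> N) \<and>
     (\<forall>a\<in>N. \<forall>b\<in>N. tconnected_in TE a b) \<and>
     \<comment> \<open>acyclic: no edge lies on a cycle, i.e. its ends are disconnected after deleting it\<close>
     (\<forall>a b. {a, b} \<in> TE \<longrightarrow> \<not> tconnected_in (TE - {{a, b}}) a b)"

definition tdegree :: "nat set set \<Rightarrow> nat \<Rightarrow> nat" where
  "tdegree TE v = card {t \<in> TE. v \<in> t}"

definition tleaves :: "nat set \<Rightarrow> nat set set \<Rightarrow> nat set" where
  "tleaves N TE = {v \<in> N. tdegree TE v \<le> 1}"

definition side_leaves :: "nat set \<Rightarrow> nat set set \<Rightarrow> nat \<Rightarrow> nat \<Rightarrow> nat set" where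
  "side_leaves N TE a b = {l \<in> tleaves N TE. tconnected_in (TE - {{a, b}}) a l}"

definition is_decomp :: "'e set \<Rightarrow> nat set \<Rightarrow> nat set set \<Rightarrow> (nat \<Rightarrow> 'e) \<Rightarrow> bool" where
  "is_decomp E N TE \<tau> \<longleftrightarrow>
     is_tree N TE \<and> (\<forall>v\<in>N. tdegree TE v \<le> 3) \<and> bij_betw \<tau> (tleaves N TE) E"

definition decomp_width :: "('e set \<Rightarrow> nat) \<Rightarrow> nat set \<Rightarrow> nat set set \<Rightarrow> (nat \<Rightarrow> 'e) \<Rightarrow> nat" where
  "decomp_width ord N TE \<tau> =
     Max ({0} \<union> {ord (\<tau> ` side_leaves N TE a b) | a b. {a, b} \<in> TE})"

text \<open>Minimum width over all decompositions (0 if there is none, e.g. no edges).\<close>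
definition min_width :: "'e set \<Rightarrow> ('e set \<Rightarrow> nat) \<Rightarrow> nat" where
  "min_width E ord =
     (if \<exists>N TE \<tau>. is_decomp E N TE \<tau>
      then (LEAST k. \<exists>N TE \<tau>. is_decomp E N TE \<tau> \<and> decomp_width ord N TE \<tau> = k)
      else 0)"

definition mid_order :: "('v,'e) umultigraph \<Rightarrow> 'e set \<Rightarrow> nat" where
  "mid_order G X = card {v. (\<exists>e\<in>X. v \<in> ends G e) \<and> (\<exists>e\<in>uedges G - X. v \<in> ends G e)}"

definition bw :: "('v,'e) umultigraph \<Rightarrow> nat" where
  "bw G = min_width (uedges G) (mid_order G)"

definition SV :: "('v,'e) pre_digraph \<Rightarrow> 'e set \<Rightarrow> 'v set" where
  "SV D X = {y. (\<exists>e\<in>arcs D - X. head D e = y) \<and> (\<exists>e\<in>X. tail D e = y)}"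

definition fD :: "('v,'e) pre_digraph \<Rightarrow> 'e set \<Rightarrow> nat" where
  "fD D X = card (SV D X \<union> SV D (arcs D - X))"

definition dbw :: "('v,'e) pre_digraph \<Rightarrow> nat" where
  "dbw D = min_width (arcs D) (fD D)"

end

theory Submission
  imports Defs
begin

text \<open>Orient K_{n,n} so that every arc goes from the left part to the right part. Then no
  vertex is both a head and a tail, so f_D vanishes and the directed branch-width is 0.
  On the other hand, a subcubic tree always has an edge splitting its leaves into two parts of at
  least a third each, so every branch decomposition of the n^2 edges of K_{n,n} has a tree edge
  with at least n^2/3 edges on either side. Let S be the set of vertices incident with both sides.
  If both sides had an edge avoiding S, the edge from the left end of one to the right end of the
  other would force one of these ends into S; so one side lies among the at most 2n|S| edges
  meeting S, whence |S| \<ge> n/6 and the branch-width of u(D) is unbounded.\<close>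

lemma tadj_commute: "tadj E a b \<longleftrightarrow> tadj E b a"
  unfolding tadj_def by (simp add: insert_commute)

lemma tconnected_in_refl: "tconnected_in E a a"
  unfolding tconnected_in_def by simp

lemma tconnected_in_step: "tconnected_in E a b \<Longrightarrow> {b, c} \<in> E \<Longrightarrow> tconnected_in E a c"
  unfolding tconnected_in_def tadj_def by (rule rtranclp.rtrancl_into_rtrancl)

lemma tconnected_in_trans:
  "tconnected_in E a b \<Longrightarrow> tconnected_in E b c \<Longrightarrow> tconnected_in E a c"
  unfolding tconnected_in_def by (rule rtranclp_trans)

lemma tconnected_in_sym: "tconnected_in E a b \<Longrightarrow> tconnected_in E b a"
  unfolding tconnected_in_def
  by (induction rule: rtranclp_induct)
     (auto intro: converse_rtranclp_into_rtranclp tadj_commute[THEN iffD1])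

lemma tconnected_in_induct[consumes 1, case_names refl step]:
  assumes "tconnected_in E a z" and "P a"
    and "\<And>z w. tconnected_in E a z \<Longrightarrow> {z, w} \<in> E \<Longrightarrow> P z \<Longrightarrow> P w"
  shows "P z"
  using assms(1) unfolding tconnected_in_def
  by (induction rule: rtranclp_induct) (auto intro: assms(2,3) simp: tconnected_in_def tadj_def)

lemma tconnected_in_invariant:
  assumes "\<And>u v. {u, v} \<in> E \<Longrightarrow> P u \<longleftrightarrow> P v" and "tconnected_in E a b"
  shows "P a \<longleftrightarrow> P b"
  using assms(2) by (induction rule: tconnected_in_induct) (use assms(1) in blast)+

lemma tconnected_in_empty: "tconnected_in {} a b \<Longrightarrow> a = b"
  by (induction rule: tconnected_in_induct) auto

subsection \<open>Sides of a tree edge\<close>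

lemma is_tree_edgeD:
  assumes "is_tree N TE" and "t \<in> TE"
  shows "card t = 2" and "t \<subseteq> N"
  using assms unfolding is_tree_def by blast+

lemma is_tree_edge_neq: "is_tree N TE \<Longrightarrow> {a, b} \<in> TE \<Longrightarrow> a \<noteq> b"
  using is_tree_edgeD(1) by fastforce

lemma is_tree_bridge: "is_tree N TE \<Longrightarrow> {a, b} \<in> TE \<Longrightarrow> \<not> tconnected_in (TE - {{a, b}}) a b"
  unfolding is_tree_def by blast

lemma is_tree_finite: "is_tree N TE \<Longrightarrow> finite N"
  unfolding is_tree_def by blast

lemma is_tree_finite_edges: "is_tree N TE \<Longrightarrow> finite TE"
  by (meson PowI finite_Pow_iff finite_subset is_tree_edgeD(2) is_tree_finite subsetI)

lemma is_tree_no_edges: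
  assumes "is_tree N TE" and "TE = {}"
  shows "card N = 1"
proof -
  obtain a where "a \<in> N" using assms(1) unfolding is_tree_def by blast
  with assms have "N = {a}"
    unfolding is_tree_def using tconnected_in_empty by blast
  then show ?thesis by simp
qed

definition side_nodes :: "nat set \<Rightarrow> nat set set \<Rightarrow> nat \<Rightarrow> nat \<Rightarrow> nat set" where
  "side_nodes N TE a b = {v \<in> N. tconnected_in (TE - {{a, b}}) a v}"

lemma side_leaves_eq: "side_leaves N TE a b = side_nodes N TE a b \<inter> tleaves N TE"
  unfolding side_leaves_def side_nodes_def tleaves_def by auto

lemma tree_nodes_subset_sides:
  assumes T: "is_tree N TE" and ab: "{a, b} \<in> TE"
  shows "N \<subseteq> side_nodes N TE a b \<union> side_nodes N TE b a"
proof
  fix v assume v: "v \<in> N"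
  have "a \<in> N" using is_tree_edgeD(2)[OF T ab] by auto
  with T v have "tconnected_in TE a v" unfolding is_tree_def by blast
  then have "tconnected_in (TE - {{a, b}}) a v \<or> tconnected_in (TE - {{a, b}}) b v"
  proof (induction rule: tconnected_in_induct)
    case refl then show ?case by (simp add: tconnected_in_refl)
  next
    case (step z w)
    show ?case
    proof (cases "{z, w} = {a, b}")
      case True
      then have "w = a \<or> w = b" by (auto simp: doubleton_eq_iff)
      then show ?thesis by (auto simp: tconnected_in_refl)
    next
      case False
      with step show ?thesis by (blast intro: tconnected_in_step)
    qed
  qed
  with v show "v \<in> side_nodes N TE a b \<union> side_nodes N TE b a"
    unfolding side_nodes_def by (auto simp: insert_commute)
qed

lemma side_nodes_adjacent_subset:
  assumes T: "is_tree N TE" and xy: "{x, y} \<in> TE" and xc: "{x, c} \<in> TE" and "c \<noteq> y"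
  shows "side_nodes N TE c x \<subset> side_nodes N TE x y"
proof
  have bridge: "\<not> tconnected_in (TE - {{c, x}}) c x"
    using is_tree_bridge[OF T] xc by (simp add: insert_commute)
  have xc': "{x, c} \<in> TE - {{x, y}}"
    using xc \<open>c \<noteq> y\<close> is_tree_edge_neq[OF T xc] by (auto simp: doubleton_eq_iff)
  show "side_nodes N TE c x \<subseteq> side_nodes N TE x y"
  proof (clarsimp simp: side_nodes_def)
    fix z assume "tconnected_in (TE - {{c, x}}) c z"
    then show "tconnected_in (TE - {{x, y}}) x z"
    proof (induction rule: tconnected_in_induct)
      case refl
      show ?case using xc' by (rule tconnected_in_step[OF tconnected_in_refl])
    next
      case (step z w)
      \<comment> \<open>the edge {x,y} cannot be crossed: x is not on c's side of {c,x}\<close>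
      have "{z, w} \<noteq> {x, y}"
        using bridge step.hyps tconnected_in_step by (fastforce simp: doubleton_eq_iff)
      with step show ?case by (blast intro: tconnected_in_step)
    qed
  qed
  have "x \<in> side_nodes N TE x y"
    using is_tree_edgeD(2)[OF T xy] by (simp add: side_nodes_def tconnected_in_refl)
  moreover have "x \<notin> side_nodes N TE c x"
    using bridge by (simp add: side_nodes_def)
  ultimately show "side_nodes N TE c x \<noteq> side_nodes N TE x y" by blast
qed

lemma side_nodes_subset_adjacent_sides:
  assumes T: "is_tree N TE" and xy: "{x, y} \<in> TE"
  shows "side_nodes N TE x y \<subseteq> {x} \<union> (\<Union>c \<in> {c. {x, c} \<in> TE \<and> c \<noteq> y}. side_nodes N TE c x)"
proof
  fix z assume "z \<in> side_nodes N TE x y"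
  then have z: "z \<in> N" "tconnected_in (TE - {{x, y}}) x z" by (auto simp: side_nodes_def)
  from z(2) have "z = x \<or> (\<exists>c. {x, c} \<in> TE \<and> c \<noteq> y \<and> tconnected_in (TE - {{c, x}}) c z)"
  proof (induction rule: tconnected_in_induct)
    case refl then show ?case by simp
  next
    case (step z w)
    from step.IH show ?case
    proof
      assume "z = x"
      with step.hyps(2) show ?thesis by (auto intro: tconnected_in_refl)
    next
      assume "\<exists>c. {x, c} \<in> TE \<and> c \<noteq> y \<and> tconnected_in (TE - {{c, x}}) c z"
      then obtain c where c: "{x, c} \<in> TE" "c \<noteq> y" "tconnected_in (TE - {{c, x}}) c z"
        by blast
      show ?thesis
      proof (cases "{z, w} = {c, x}")
        case True
        then have "w = c \<or> w = x" by (auto simp: doubleton_eq_iff)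
        with c show ?thesis by (auto intro: tconnected_in_refl)
      next
        case False
        with c step.hyps(2) show ?thesis by (blast intro: tconnected_in_step)
      qed
    qed
  qed
  with z(1) show "z \<in> {x} \<union> (\<Union>c \<in> {c. {x, c} \<in> TE \<and> c \<noteq> y}. side_nodes N TE c x)"
    by (auto simp: side_nodes_def)
qed

lemma card_other_neighbours_le:
  assumes T: "is_tree N TE" and deg: "tdegree TE x \<le> 3" and xy: "{x, y} \<in> TE"
  shows "card {c. {x, c} \<in> TE \<and> c \<noteq> y} \<le> 2"
proof -
  let ?C = "{c. {x, c} \<in> TE \<and> c \<noteq> y}"
  have "inj_on (insert x \<circ> (\<lambda>c. {c})) ?C"
    by (rule inj_onI) (use is_tree_edge_neq[OF T] in \<open>auto simp: doubleton_eq_iff\<close>)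
  then have "card ?C = card ((\<lambda>c. {x, c}) ` ?C)"
    by (simp add: card_image comp_def)
  also have "\<dots> \<le> card ({t \<in> TE. x \<in> t} - {{x, y}})"
  proof (rule card_mono)
    show "finite ({t \<in> TE. x \<in> t} - {{x, y}})"
      using is_tree_finite_edges[OF T] by simp
    show "(\<lambda>c. {x, c}) ` ?C \<subseteq> {t \<in> TE. x \<in> t} - {{x, y}}"
      using is_tree_edge_neq[OF T] by (auto simp: doubleton_eq_iff)
  qed
  also have "\<dots> = tdegree TE x - 1"
    using xy by (simp add: tdegree_def card_Diff_singleton)
  finally show ?thesis using deg by simp
qed

lemma card_side_leaves_le:
  assumes T: "is_tree N TE" and deg: "tdegree TE x \<le> 3" and xy: "{x, y} \<in> TE"
    and bound: "\<And>c. {x, c} \<in> TE \<Longrightarrow> c \<noteq> y \<Longrightarrow> card (side_leaves N TE c x) \<le> k"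
  shows "card (side_leaves N TE x y) \<le> 1 + 2 * k"
proof -
  let ?C = "{c. {x, c} \<in> TE \<and> c \<noteq> y}"
  have finN: "finite N" using is_tree_finite[OF T] .
  have finC: "finite ?C"
    by (rule finite_subset[OF _ finN]) (use is_tree_edgeD(2)[OF T] in auto)
  have "side_leaves N TE x y \<subseteq> {x} \<union> (\<Union>c \<in> ?C. side_leaves N TE c x)"
    using side_nodes_subset_adjacent_sides[OF T xy] by (auto simp: side_leaves_eq)
  then have "card (side_leaves N TE x y) \<le> card ({x} \<union> (\<Union>c \<in> ?C. side_leaves N TE c x))"
    by (rule card_mono[rotated]) (use finC finN in \<open>auto simp: side_leaves_def tleaves_def\<close>)
  also have "\<dots> \<le> card {x} + card (\<Union>c \<in> ?C. side_leaves N TE c x)"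
    by (rule card_Un_le)
  also have "\<dots> \<le> 1 + (\<Sum>c \<in> ?C. card (side_leaves N TE c x))"
    using card_UN_le[OF finC] by simp
  also have "\<dots> \<le> 1 + card ?C * k"
    using sum_bounded_above[of ?C "\<lambda>c. card (side_leaves N TE c x)" k] bound by simp
  also have "\<dots> \<le> 1 + 2 * k"
    using mult_right_mono[OF card_other_neighbours_le[OF T deg xy], of k] by simp
  finally show ?thesis .
qed

text \<open>Walk from a tree edge with at least a third of the leaves on its side towards that side
  while this remains true; the number of nodes on the side strictly decreases, and the walk can
  only stop at an edge that splits the leaves into two parts of at least a third each.\<close>

lemma balanced_tree_edge_from:
  assumes T: "is_tree N TE" and deg: "\<forall>v\<in>N. tdegree TE v \<le> 3"
    and ab: "{a, b} \<in> TE" and t: "card (tleaves N TE) div 3 \<le> card (side_leaves N TE a b)"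
  shows "\<exists>a b. {a, b} \<in> TE \<and> card (tleaves N TE) div 3 \<le> card (side_leaves N TE a b)
           \<and> card (tleaves N TE) div 3 \<le> card (tleaves N TE) - card (side_leaves N TE a b)"
    (is "\<exists>a b. _ \<and> ?t \<le> _ \<and> ?t \<le> ?m - _")
  using ab t
proof (induction "card (side_nodes N TE a b)" arbitrary: a b rule: less_induct)
  case less
  show ?case
  proof (cases "?t \<le> ?m - card (side_leaves N TE a b)")
    case True with less.prems show ?thesis by blast
  next
    case False
    then have "1 + 2 * (?t - 1) < card (side_leaves N TE a b)" by linarith
    moreover have "tdegree TE a \<le> 3"
      using deg is_tree_edgeD(2)[OF T less.prems(1)] by auto
    ultimately obtain c where ac: "{a, c} \<in> TE" and "c \<noteq> b"
      and "\<not> card (side_leaves N TE c a) \<le> ?t - 1"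
      using card_side_leaves_le[OF T _ less.prems(1)] by (meson not_le)
    then have tc: "?t \<le> card (side_leaves N TE c a)" by linarith
    have "side_nodes N TE c a \<subset> side_nodes N TE a b"
      by (rule side_nodes_adjacent_subset[OF T less.prems(1) ac \<open>c \<noteq> b\<close>])
    then have "card (side_nodes N TE c a) < card (side_nodes N TE a b)"
      by (rule psubset_card_mono[rotated]) (use is_tree_finite[OF T] in \<open>simp add: side_nodes_def\<close>)
    moreover have "{c, a} \<in> TE" using ac by (simp add: insert_commute)
    ultimately show ?thesis using less.hyps tc by blast
  qed
qed

lemma exists_balanced_tree_edge:
  assumes T: "is_tree N TE" and deg: "\<forall>v\<in>N. tdegree TE v \<le> 3"
    and L: "2 \<le> card (tleaves N TE)"
  shows "\<exists>a b. {a, b} \<in> TE \<and> card (tleaves N TE) div 3 \<le> card (side_leaves N TE a b)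
           \<and> card (tleaves N TE) div 3 \<le> card (tleaves N TE) - card (side_leaves N TE a b)"
proof -
  let ?m = "card (tleaves N TE)"
  have finN: "finite N" using is_tree_finite[OF T] .
  have "tleaves N TE \<subseteq> N" by (auto simp: tleaves_def)
  then have "2 \<le> card N" using L card_mono[OF finN] le_trans by blast
  then have "TE \<noteq> {}" using is_tree_no_edges[OF T] by auto
  then obtain e where "e \<in> TE" by blast
  then obtain a b where ab: "{a, b} \<in> TE"
    using is_tree_edgeD(1)[OF T] card_2_iff by metis
  have "tleaves N TE \<subseteq> side_leaves N TE a b \<union> side_leaves N TE b a"
    using tree_nodes_subset_sides[OF T ab] by (auto simp: side_leaves_eq tleaves_def)
  moreover have "finite (side_leaves N TE u v)" for u v
    by (rule finite_subset[OF _ finN]) (auto simp: side_leaves_def tleaves_def)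
  ultimately have "?m \<le> card (side_leaves N TE a b \<union> side_leaves N TE b a)"
    by (simp add: card_mono)
  also have "\<dots> \<le> card (side_leaves N TE a b) + card (side_leaves N TE b a)"
    by (rule card_Un_le)
  finally have "?m div 3 \<le> card (side_leaves N TE a b) \<or> ?m div 3 \<le> card (side_leaves N TE b a)"
    by linarith
  moreover have "{b, a} \<in> TE" using ab by (simp add: insert_commute)
  ultimately show ?thesis using balanced_tree_edge_from[OF T deg] ab by blast
qed

lemma decomp_width_ge:
  assumes D: "is_decomp E N TE \<tau>" and ab: "{a, b} \<in> TE"
  shows "ord (\<tau> ` side_leaves N TE a b) \<le> decomp_width ord N TE \<tau>"
proof -
  have T: "is_tree N TE" using D by (simp add: is_decomp_def)
  let ?orders = "{ord (\<tau> ` side_leaves N TE a b) | a b. {a, b} \<in> TE}"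
  have "?orders \<subseteq> (\<lambda>(a, b). ord (\<tau> ` side_leaves N TE a b)) ` (N \<times> N)"
  proof
    fix k assume "k \<in> ?orders"
    then obtain a b where "k = ord (\<tau> ` side_leaves N TE a b)" and "{a, b} \<in> TE"
      by blast
    with is_tree_edgeD(2)[OF T] show "k \<in> (\<lambda>(a, b). ord (\<tau> ` side_leaves N TE a b)) ` (N \<times> N)"
      by (auto intro!: image_eqI[of _ _ "(a, b)"])
  qed
  then have "finite ?orders"
    by (rule finite_subset) (simp add: is_tree_finite[OF T])
  then have "finite ({0} \<union> ?orders)" by simp
  moreover have "ord (\<tau> ` side_leaves N TE a b) \<in> {0} \<union> ?orders"
    using ab by blast
  ultimately show ?thesis
    unfolding decomp_width_def by (rule Max_ge)
qed

lemma min_width_attained: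
  assumes "\<exists>N TE \<tau>. is_decomp E N TE \<tau>"
  obtains N TE \<tau> where "is_decomp E N TE \<tau>" and "decomp_width ord N TE \<tau> = min_width E ord"
proof -
  let ?W = "\<lambda>k. \<exists>N TE \<tau>. is_decomp E N TE \<tau> \<and> decomp_width ord N TE \<tau> = k"
  from assms obtain N TE \<tau> where "is_decomp E N TE \<tau>" by blast
  then have "?W (decomp_width ord N TE \<tau>)" by blast
  then have "?W (LEAST k. ?W k)" by (rule LeastI)
  moreover have "min_width E ord = (LEAST k. ?W k)"
    using assms unfolding min_width_def by (rule if_P)
  ultimately obtain N' TE' \<tau>' where "is_decomp E N' TE' \<tau>'"
    and "decomp_width ord N' TE' \<tau>' = min_width E ord"
    by metis
  then show thesis by (rule that)
qed

lemma min_width_ge: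
  assumes "is_decomp E N TE \<tau>"
    and "\<And>N TE \<tau>. is_decomp E N TE \<tau> \<Longrightarrow> \<exists>a b. {a, b} \<in> TE \<and> k \<le> ord (\<tau> ` side_leaves N TE a b)"
  shows "k \<le> min_width E ord"
proof -
  obtain N' TE' \<tau>' where D: "is_decomp E N' TE' \<tau>'"
    and eq: "decomp_width ord N' TE' \<tau>' = min_width E ord"
    using min_width_attained assms(1) by blast
  with assms(2) obtain a b where "{a, b} \<in> TE'" and "k \<le> ord (\<tau>' ` side_leaves N' TE' a b)"
    by blast
  with decomp_width_ge[OF D, of a b ord] eq show ?thesis
    by linarith
qed

lemma min_width_eq_0:
  assumes "\<And>X. X \<subseteq> E \<Longrightarrow> ord X = 0"
  shows "min_width E ord = 0"
proof -
  have zero: "decomp_width ord N TE \<tau> = 0" if "is_decomp E N TE \<tau>" for N TE \<tau>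
  proof -
    have "\<tau> ` side_leaves N TE a b \<subseteq> \<tau> ` tleaves N TE" for a b
      by (rule image_mono) (auto simp: side_leaves_def)
    also have "\<tau> ` tleaves N TE = E"
      using that by (simp add: is_decomp_def bij_betw_def)
    finally have "ord (\<tau> ` side_leaves N TE a b) = 0" for a b
      by (rule assms)
    then have "{0} \<union> {ord (\<tau> ` side_leaves N TE a b) | a b. {a, b} \<in> TE} = {0}"
      by (simp only:) auto
    then show ?thesis
      unfolding decomp_width_def by (simp only: Max_singleton)
  qed
  have "(LEAST k. \<exists>N TE \<tau>. is_decomp E N TE \<tau> \<and> decomp_width ord N TE \<tau> = k) = 0"
    if "\<exists>N TE \<tau>. is_decomp E N TE \<tau>"
    by (rule Least_eq_0) (use zero that in blast)
  then show ?thesis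
    unfolding min_width_def by simp
qed

lemma decomp_balanced_edge:
  assumes D: "is_decomp E N TE \<tau>" and E: "2 \<le> card E"
  shows "\<exists>a b. {a, b} \<in> TE \<and> card E div 3 \<le> card (\<tau> ` side_leaves N TE a b)
           \<and> card E div 3 \<le> card (E - \<tau> ` side_leaves N TE a b)"
proof -
  have T: "is_tree N TE" and deg: "\<forall>v\<in>N. tdegree TE v \<le> 3"
    and bij: "bij_betw \<tau> (tleaves N TE) E"
    using D by (auto simp: is_decomp_def)
  have cardL: "card (tleaves N TE) = card E"
    using bij_betw_same_card[OF bij] .
  have finE: "finite E"
    using E card.infinite by force
  have side: "side_leaves N TE a b \<subseteq> tleaves N TE" for a b
    by (auto simp: side_leaves_def)
  obtain a b where ab: "{a, b} \<in> TE"
    and balanced: "card E div 3 \<le> card (side_leaves N TE a b)"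
      "card E div 3 \<le> card E - card (side_leaves N TE a b)"
    using exists_balanced_tree_edge[OF T deg] E cardL by auto
  have "card (\<tau> ` side_leaves N TE a b) = card (side_leaves N TE a b)"
    using bij side by (meson bij_betw_def card_image inj_on_subset)
  moreover have "card (E - \<tau> ` side_leaves N TE a b) = card E - card (\<tau> ` side_leaves N TE a b)"
  proof (rule card_Diff_subset)
    show "\<tau> ` side_leaves N TE a b \<subseteq> E"
      using bij side by (auto simp: bij_betw_def)
    then show "finite (\<tau> ` side_leaves N TE a b)"
      using finE by (rule finite_subset)
  qed
  ultimately show ?thesis
    using ab balanced by (intro exI[of _ a] exI[of _ b]) simp
qed

subsection \<open>A caterpillar decomposition\<close>

text \<open>Since min_width is 0 when there is no decomposition at all, a lower bound on the
  branch-width needs an explicit decomposition.\<close>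

definition caterpillar :: "nat \<Rightarrow> nat set set" where
  "caterpillar m = {{i, m + i} | i. i < m} \<union> {{m + i, m + i + 1} | i. i + 1 < m}"

lemma caterpillar_memE:
  assumes "t \<in> caterpillar m"
  obtains (leaf) j where "j < m" "t = {j, m + j}"
    | (spine) j where "j + 1 < m" "t = {m + j, m + j + 1}"
  using assms unfolding caterpillar_def by blast

lemma caterpillar_connected: "v < 2 * m \<Longrightarrow> tconnected_in (caterpillar m) m v"
proof -
  have spine: "tconnected_in (caterpillar m) m (m + i)" if "i < m" for i
    using that
  proof (induction i)
    case 0 then show ?case by (simp add: tconnected_in_refl)
  next
    case (Suc i)
    then have "{m + i, m + Suc i} \<in> caterpillar m" by (auto simp: caterpillar_def)
    with Suc show ?case by (auto intro: tconnected_in_step)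
  qed
  assume "v < 2 * m"
  show ?thesis
  proof (cases "v < m")
    case True
    then have "{m + v, v} \<in> caterpillar m" by (auto simp: caterpillar_def insert_commute)
    with spine[OF True] show ?thesis by (rule tconnected_in_step)
  next
    case False
    with spine[of "v - m"] \<open>v < 2 * m\<close> show ?thesis by simp
  qed
qed

lemma caterpillar_leaf_bridge:
  assumes "i < m"
  shows "\<not> tconnected_in (caterpillar m - {{i, m + i}}) i (m + i)"
proof
  assume "tconnected_in (caterpillar m - {{i, m + i}}) i (m + i)"
  moreover have "u = i \<longleftrightarrow> v = i" if "{u, v} \<in> caterpillar m - {{i, m + i}}" for u v
    using that assms by (auto simp: doubleton_eq_iff elim!: caterpillar_memE)
  ultimately have "i = i \<longleftrightarrow> m + i = i"
    by (rule tconnected_in_invariant[rotated])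
  with assms show False by simp
qed

lemma caterpillar_spine_bridge:
  assumes "i + 1 < m"
  shows "\<not> tconnected_in (caterpillar m - {{m + i, m + i + 1}}) (m + i) (m + i + 1)"
proof
  \<comment> \<open>the first i + 1 spine nodes and their leaves are cut off from the rest\<close>
  let ?P = "\<lambda>v. v \<le> i \<or> (m \<le> v \<and> v \<le> m + i)"
  assume "tconnected_in (caterpillar m - {{m + i, m + i + 1}}) (m + i) (m + i + 1)"
  moreover have "?P u \<longleftrightarrow> ?P v" if "{u, v} \<in> caterpillar m - {{m + i, m + i + 1}}" for u v
    using that by (auto simp: doubleton_eq_iff elim!: caterpillar_memE)
  ultimately have "?P (m + i) \<longleftrightarrow> ?P (m + i + 1)"
    by (rule tconnected_in_invariant[rotated])
  then show False by simp
qed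

lemma caterpillar_bridge:
  assumes "{a, b} \<in> caterpillar m"
  shows "\<not> tconnected_in (caterpillar m - {{a, b}}) a b"
  using assms
proof (cases rule: caterpillar_memE)
  case (leaf j)
  then have "a = j \<and> b = m + j \<or> a = m + j \<and> b = j"
    by (simp add: doubleton_eq_iff)
  with leaf show ?thesis
    using caterpillar_leaf_bridge[of j m] tconnected_in_sym by (auto simp: insert_commute)
next
  case (spine j)
  then have "a = m + j \<and> b = m + j + 1 \<or> a = m + j + 1 \<and> b = m + j"
    by (simp add: doubleton_eq_iff)
  with spine show ?thesis
    using caterpillar_spine_bridge[of j m] tconnected_in_sym by (auto simp: insert_commute)
qed

lemma caterpillar_tdegree_leaf:
  assumes "v < m"
  shows "tdegree (caterpillar m) v = 1"
proof -
  have "{t \<in> caterpillar m. v \<in> t} = {{v, m + v}}"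
    using assms by (auto simp: caterpillar_def)
  then show ?thesis by (simp add: tdegree_def)
qed

lemma caterpillar_tdegree_spine:
  assumes "2 \<le> m" and "i < m"
  shows "2 \<le> tdegree (caterpillar m) (m + i)" and "tdegree (caterpillar m) (m + i) \<le> 3"
proof -
  let ?I = "{t \<in> caterpillar m. m + i \<in> t}"
  have sub: "?I \<subseteq> {{i, m + i}, {m + i - 1, m + i}, {m + i, m + i + 1}}"
  proof
    fix t assume "t \<in> ?I"
    then have "t \<in> caterpillar m" and "m + i \<in> t" by auto
    then show "t \<in> {{i, m + i}, {m + i - 1, m + i}, {m + i, m + i + 1}}"
      by (cases rule: caterpillar_memE) auto
  qed
  then have "card ?I \<le> card {{i, m + i}, {m + i - 1, m + i}, {m + i, m + i + 1}}"
    by (rule card_mono[rotated]) simp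
  also have "\<dots> \<le> 3"
    by (simp add: card_insert_le_m1)
  finally show "tdegree (caterpillar m) (m + i) \<le> 3"
    unfolding tdegree_def .
  obtain s where "s \<in> ?I" and "s \<noteq> {i, m + i}"
  proof (cases "i + 1 < m")
    case True
    then show ?thesis
      using that[of "{m + i, m + i + 1}"] by (auto simp: caterpillar_def doubleton_eq_iff)
  next
    case False
    with assms have "(i - 1) + 1 < m" by simp
    then have "{m + (i - 1), m + (i - 1) + 1} \<in> caterpillar m"
      unfolding caterpillar_def by blast
    moreover have "m + (i - 1) + 1 = m + i" using False assms by simp
    ultimately have "{m + (i - 1), m + i} \<in> ?I" by simp
    moreover have "{m + (i - 1), m + i} \<noteq> {i, m + i}"
      using False assms by (auto simp: doubleton_eq_iff)
    ultimately show ?thesis by (rule that)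
  qed
  moreover have "{i, m + i} \<in> ?I"
    using assms by (auto simp: caterpillar_def)
  moreover have "finite ?I"
    using sub finite_subset by blast
  ultimately have "card {{i, m + i}, s} \<le> card ?I"
    by (intro card_mono) auto
  with \<open>s \<noteq> {i, m + i}\<close> show "2 \<le> tdegree (caterpillar m) (m + i)"
    by (simp add: tdegree_def)
qed

lemma caterpillar_is_decomp:
  assumes "2 \<le> m"
  shows "is_decomp {0..<m} {0..<2 * m} (caterpillar m) id"
proof -
  have "card t = 2" and "t \<subseteq> {0..<2 * m}" if "t \<in> caterpillar m" for t
    using that by (cases rule: caterpillar_memE; simp)+
  moreover have "tconnected_in (caterpillar m) a b" if "a < 2 * m" and "b < 2 * m" for a b
    by (rule tconnected_in_trans[OF tconnected_in_sym[OF caterpillar_connected[OF that(1)]]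
          caterpillar_connected[OF that(2)]])
  ultimately have "is_tree {0..<2 * m} (caterpillar m)"
    using assms caterpillar_bridge by (auto simp: is_tree_def)
  moreover have "tdegree (caterpillar m) v \<le> 3 \<and> (tdegree (caterpillar m) v \<le> 1 \<longleftrightarrow> v < m)"
    if "v < 2 * m" for v
  proof (cases "v < m")
    case True
    then show ?thesis using caterpillar_tdegree_leaf by simp
  next
    case False
    with that have "v - m < m" and "v = m + (v - m)" by auto
    then show ?thesis
      using caterpillar_tdegree_spine[OF assms, of "v - m"] False by simp
  qed
  then have "\<forall>v\<in>{0..<2 * m}. tdegree (caterpillar m) v \<le> 3"
    and "tleaves {0..<2 * m} (caterpillar m) = {0..<m}"
    by (auto simp: tleaves_def)
  ultimately show ?thesis
    by (simp add: is_decomp_def)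
qed

subsection \<open>The bipartite digraph\<close>

definition bipartite_digraph :: "nat \<Rightarrow> (nat, nat) pre_digraph" where
  "bipartite_digraph n = \<lparr>verts = {0..<2 * n}, arcs = {0..<n * n},
                          tail = (\<lambda>e. e div n), head = (\<lambda>e. n + e mod n)\<rparr>"

lemma div_mod_less_of_less_square:
  assumes "e < n * (n :: nat)"
  shows "e div n < n" and "e mod n < n"
  using assms less_mult_imp_div_less by (cases "n = 0"; simp)+

lemma fin_digraph_bipartite_digraph: "fin_digraph (bipartite_digraph n)"
proof unfold_locales
  fix e assume "e \<in> arcs (bipartite_digraph n)"
  then have "e < n * n" by (simp add: bipartite_digraph_def)
  note div_mod_less_of_less_square[OF this]
  then show "tail (bipartite_digraph n) e \<in> verts (bipartite_digraph n)"
    and "head (bipartite_digraph n) e \<in> verts (bipartite_digraph n)"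
    by (simp_all add: bipartite_digraph_def)
qed (simp_all add: bipartite_digraph_def)

lemma dbw_bipartite_digraph: "dbw (bipartite_digraph n) = 0"
  unfolding dbw_def
proof (rule min_width_eq_0)
  fix X assume "X \<subseteq> arcs (bipartite_digraph n)"
  have "SV (bipartite_digraph n) Y = {}" if "Y \<subseteq> arcs (bipartite_digraph n)" for Y
  proof -
    have "n + e mod n \<noteq> e' div n" if "e' \<in> arcs (bipartite_digraph n)" for e e'
      using that less_mult_imp_div_less[of e' n n] by (simp add: bipartite_digraph_def)
    then show ?thesis
      using that unfolding SV_def by (auto simp: bipartite_digraph_def)
  qed
  with \<open>X \<subseteq> arcs (bipartite_digraph n)\<close> show "fD (bipartite_digraph n) X = 0"
    by (simp add: fD_def)
qed

lemma card_arcs_meeting_le: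
  assumes "finite S"
  shows "card {e \<in> {0..<n * n}. e div n \<in> S \<or> n + e mod n \<in> S} \<le> 2 * n * card S"
proof -
  let ?A = "(\<lambda>(v, j). v * n + j) ` (S \<times> {0..<n})"
  let ?B = "(\<lambda>(v, i). i * n + (v - n)) ` (S \<times> {0..<n})"
  have "{e \<in> {0..<n * n}. e div n \<in> S \<or> n + e mod n \<in> S} \<subseteq> ?A \<union> ?B"
  proof
    fix e assume e: "e \<in> {e \<in> {0..<n * n}. e div n \<in> S \<or> n + e mod n \<in> S}"
    then have "e div n < n" and "e mod n < n"
      by (simp_all add: div_mod_less_of_less_square)
    show "e \<in> ?A \<union> ?B"
    proof (cases "e div n \<in> S")
      case True
      with \<open>e mod n < n\<close> have "(e div n, e mod n) \<in> S \<times> {0..<n}" by simp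
      then show ?thesis by (auto intro!: image_eqI[of _ _ "(e div n, e mod n)"])
    next
      case False
      with e \<open>e div n < n\<close> have "(n + e mod n, e div n) \<in> S \<times> {0..<n}" by simp
      then show ?thesis by (auto intro!: image_eqI[of _ _ "(n + e mod n, e div n)"])
    qed
  qed
  then have "card {e \<in> {0..<n * n}. e div n \<in> S \<or> n + e mod n \<in> S} \<le> card (?A \<union> ?B)"
    by (rule card_mono[rotated]) (use assms in simp)
  also have "\<dots> \<le> card ?A + card ?B"
    by (rule card_Un_le)
  also have "\<dots> \<le> card S * n + card S * n"
    using card_image_le[of "S \<times> {0..<n}"] assms by (intro add_mono) (simp_all add: card_cartesian_product)
  finally show ?thesis by (simp add: algebra_simps)
qed

lemma exists_arc_avoiding:
  assumes "finite S" and "Y \<subseteq> {0..<n * n}" and "2 * n * card S < card Y"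
  shows "\<exists>e\<in>Y. e div n \<notin> S \<and> n + e mod n \<notin> S"
proof (rule ccontr)
  assume "\<not> ?thesis"
  with assms(2) have "Y \<subseteq> {e \<in> {0..<n * n}. e div n \<in> S \<or> n + e mod n \<in> S}"
    by blast
  then have "card Y \<le> card {e \<in> {0..<n * n}. e div n \<in> S \<or> n + e mod n \<in> S}"
    by (rule card_mono[rotated]) simp
  with card_arcs_meeting_le[OF assms(1), of n] assms(3) show False
    by linarith
qed

lemma mid_order_bipartite_digraph_ge:
  assumes X: "X \<subseteq> {0..<n * n}"
  shows "min (card X) (card ({0..<n * n} - X))
           \<le> 2 * n * mid_order (underlying (bipartite_digraph n)) X"
proof (rule ccontr)
  let ?E = "{0..<n * n}"
  define S where "S = {v. (\<exists>e\<in>X. v \<in> {e div n, n + e mod n})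
                        \<and> (\<exists>e\<in>?E - X. v \<in> {e div n, n + e mod n})}"
  have mid: "mid_order (underlying (bipartite_digraph n)) X = card S"
    by (simp add: mid_order_def S_def underlying_def bipartite_digraph_def)
  have "S \<subseteq> {0..<2 * n}"
    using X div_mod_less_of_less_square by (fastforce simp: S_def)
  then have finS: "finite S"
    by (rule finite_subset) simp
  assume "\<not> ?thesis"
  then have "2 * n * card S < card X" and "2 * n * card S < card (?E - X)"
    by (simp_all add: mid)
  then obtain e1 e2 where e1: "e1 \<in> X" "e1 div n \<notin> S"
    and e2: "e2 \<in> ?E - X" "n + e2 mod n \<notin> S"
    using exists_arc_avoiding[OF finS X] exists_arc_avoiding[OF finS Diff_subset] by blast
  \<comment> \<open>the arc from the left end of e1 to the right end of e2 lies on one side and shares an end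
    with the arc on the other side, and that end is a boundary vertex\<close>
  define e3 where "e3 = e1 div n * n + e2 mod n"
  have "e1 div n < n" and "e2 mod n < n"
    using e1(1) e2(1) X div_mod_less_of_less_square by auto
  then have "e3 div n = e1 div n" and "e3 mod n = e2 mod n"
    by (simp_all add: e3_def)
  have "e3 < Suc (e1 div n) * n"
    using \<open>e2 mod n < n\<close> by (simp add: e3_def)
  also have "\<dots> \<le> n * n"
    using \<open>e1 div n < n\<close> by (intro mult_le_mono1) simp
  finally have "e3 \<in> ?E" by simp
  show False
  proof (cases "e3 \<in> X")
    case True
    moreover have "n + e2 mod n \<in> {e3 div n, n + e3 mod n}"
      using \<open>e3 mod n = e2 mod n\<close> by simp
    ultimately have "n + e2 mod n \<in> S"
      using e2(1) unfolding S_def by blast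
    with e2 show False by simp
  next
    case False
    with \<open>e3 \<in> ?E\<close> have "e3 \<in> ?E - X" by simp
    moreover have "e1 div n \<in> {e3 div n, n + e3 mod n}"
      using \<open>e3 div n = e1 div n\<close> by simp
    ultimately have "e1 div n \<in> S"
      using e1(1) unfolding S_def by blast
    with e1 show False by simp
  qed
qed

lemma bw_bipartite_digraph_ge: "p \<le> bw (underlying (bipartite_digraph (6 * p)))"
proof (cases "p = 0")
  case False
  define n where "n = 6 * p"
  let ?G = "underlying (bipartite_digraph n)" and ?E = "{0..<n * n}"
  have E: "uedges ?G = ?E"
    by (simp add: underlying_def bipartite_digraph_def)
  have card_E: "card ?E div 3 = 12 * p * p" and "2 \<le> card ?E"
    using False by (simp_all add: n_def)
  have "p \<le> min_width ?E (mid_order ?G)"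
  proof (rule min_width_ge)
    show "is_decomp ?E {0..<2 * (n * n)} (caterpillar (n * n)) id"
      using \<open>2 \<le> card ?E\<close> by (intro caterpillar_is_decomp) simp
    fix N TE \<tau> assume D: "is_decomp ?E N TE \<tau>"
    then obtain a b where ab: "{a, b} \<in> TE"
      and balanced: "12 * p * p \<le> min (card (\<tau> ` side_leaves N TE a b))
                                     (card (?E - \<tau> ` side_leaves N TE a b))"
      using decomp_balanced_edge[OF D \<open>2 \<le> card ?E\<close>] card_E by auto
    have "\<tau> ` side_leaves N TE a b \<subseteq> ?E"
      using D by (auto simp: is_decomp_def bij_betw_def side_leaves_def)
    from order_trans[OF balanced mid_order_bipartite_digraph_ge[OF this]]
    have "(12 * p) * p \<le> (12 * p) * mid_order ?G (\<tau> ` side_leaves N TE a b)"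
      by (simp add: n_def)
    with False ab show "\<exists>a b. {a, b} \<in> TE \<and> p \<le> mid_order ?G (\<tau> ` side_leaves N TE a b)"
      by auto
  qed
  then show ?thesis
    unfolding n_def[symmetric] bw_def E .
qed simp

theorem mainTheorem7:
  shows "\<not> (\<exists>f :: nat \<Rightarrow> nat. \<forall>D :: (nat, nat) pre_digraph.
            fin_digraph D \<longrightarrow> bw (underlying D) \<le> f (dbw D))"
proof
  assume "\<exists>f :: nat \<Rightarrow> nat. \<forall>D :: (nat, nat) pre_digraph.
            fin_digraph D \<longrightarrow> bw (underlying D) \<le> f (dbw D)"
  then obtain f :: "nat \<Rightarrow> nat"
    where f: "\<And>D :: (nat, nat) pre_digraph. fin_digraph D \<Longrightarrow> bw (underlying D) \<le> f (dbw D)"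
    by blast
  let ?D = "bipartite_digraph (6 * Suc (f 0))"
  have "Suc (f 0) \<le> bw (underlying ?D)"
    by (rule bw_bipartite_digraph_ge)
  also have "\<dots> \<le> f (dbw ?D)"
    by (rule f[OF fin_digraph_bipartite_digraph])
  finally show False
    by (simp add: dbw_bipartite_digraph)
qed

end
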